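(* In the setting described in the context, let $\varepsilon=\epsilon e$ with $e=(1,\dots,1)\in\mathbb{R}^p$, suppose Algorithm Solve(QVP) with tolerance $\epsilon$ terminates at iteration $K$, and let $\mathcal{L}=\mathcal{N}(\mathcal{Y}_{WN})$ and $\mathcal{U}=\mathcal{N}(V_\varepsilon)=\mathcal{P}^K$. Then (i) $\mathcal{L}\subseteq\mathcal{Y}^{\diamond}\subseteq\mathcal{U}$; (ii) ${\rm WMin}\,\mathcal{Y}^{\diamond}\subseteq\mathcal{U}_\varepsilon\cap\mathcal{Y}^{\diamond}\subseteq\mathcal{Y}^{\diamond}_\varepsilon$; (iii) ${\rm WMin}\,\mathcal{L}\subseteq\mathcal{Y}^{\diamond}_\varepsilon$.
   Context: Setting: $\mathcal{S}\subset\mathbb{R}^n$ nonempty convex compact; $f=(f_1,\dots,f_p):\mathbb{R}^n\to\mathbb{R}^p$ ($p\ge2$), each $f_i$ strictly quasiconvex on $\mathcal{S}$ (continuous and $h(x^1)<h(x^2)\Rightarrow h(\lambda x^1+(1-\lambda)x^2)<h(x^2)$ for $0<\lambda<1$). Vector inequalities are componentwise, $[a,b]=\{z:a\le z\le b\}$, $e^i$ the $i$-th unit vector. $\mathcal{Y}=f(\mathcal{S})$, $\mathcal{Y}^+=\mathcal{Y}+\mathbb{R}^p_+$. $m_i=\min_{x\in\mathcal{S}}f_i(x)$ (assume $m\notin\mathcal{Y}$); $M\in\mathbb{R}^p$ with $M_i\ge\max_{x\in\mathcal{S}}f_i(x)$ (constructed as the max of $f_i$ over the vertices of a simplex containing $\mathcal{S}$).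 $\mathcal{Y}^{\diamond}=\mathcal{Y}^+\cap(M-\mathbb{R}^p_+)$. For $Q\subset\mathbb{R}^p$: ${\rm WMin}\,Q=\{q\in Q:(q-\operatorname{int}\mathbb{R}^p_+)\cap Q=\emptyset\}$ and $Q_\varepsilon=\{q\in Q:(q-\varepsilon-\operatorname{int}\mathbb{R}^p_+)\cap Q=\emptyset\}$. For $Q\subset[m,M]$, the conormal hull is $\mathcal{N}(Q)=(Q+\mathbb{R}^p_+)\cap(M-\mathbb{R}^p_+)$ (the smallest set containing $Q$ such that $[y,M]$ lies in it for each of its points $y$). Fix $\hat d>0$; $(P^2(v))$ is $\min_{x\in\mathcal{S}}\max_j (f_j(x)-v_j)/\hat d_j$. A vertex $v$ of a finite set $V$ is proper if no other $v'\in V$, $v'\ne v$, satisfies $v'\le v$. Algorithm Solve(QVP) with tolerance $\epsilon\ge0$: $V^0=\{m\}$, $V_\varepsilon=\emptyset$, $\mathcal{Y}_{WN}=\emptyset$, $k=0$. While $V^k\setminus V_\varepsilon\ne\emptyset$: choose $v^k\in V^k\setminus V_\varepsilon$, solve $(P^2(v^k))$ with optimal $(x^k,t_k)$, set $w^k=v^k+t_k\hat d$, add $f(x^k)$ to $\mathcal{Y}_{WN}$; if $\|w^k-v^k\|\le\epsilon$, add $v^k$ to $V_\varepsilon$ and repeat the loop (without changing $k$); otherwise set $V^{k+1}=(V^k\setminus\{v^k\})\cup\{v^k+(w^k_i-v^k_i)e^i:i=1,\dots,p\}$, remove improper elements, and increase $k$ by one. $\mathcal{P}^k=\bigcup_{v\in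 V^k}[v,M]$. *)

theory Defs
  imports "HOL-Analysis.Analysis"
begin

text \<open>Vectors in R^p are represented as real^'p; the order on real^'p is the
componentwise order of the library (less_eq_vec_def).\<close>

definition nonneg_orthant :: "(real^'p) set" where
  "nonneg_orthant = {z. \<forall>i. 0 \<le> z $ i}"

definition int_orthant :: "(real^'p) set" where
  "int_orthant = {z. \<forall>i. 0 < z $ i}"

definition strictly_quasiconvex_on :: "(real^'n) set \<Rightarrow> (real^'n \<Rightarrow> real) \<Rightarrow> bool" where
  "strictly_quasiconvex_on S h \<longleftrightarrow> continuous_on S h \<and>
     (\<forall>x1\<in>S. \<forall>x2\<in>S. \<forall>l::real. 0 < l \<and> l < 1 \<and> h x1 < h x2
        \<longrightarrow> h (l *\<^sub>R x1 + (1 - l) *\<^sub>R x2) < h x2)"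

definition WMin :: "(real^'p) set \<Rightarrow> (real^'p) set" where
  "WMin Q = {q \<in> Q. {q - z | z. z \<in> int_orthant} \<inter> Q = {}}"

definition eps_min :: "real^'p \<Rightarrow> (real^'p) set \<Rightarrow> (real^'p) set" where
  "eps_min eps Q = {q \<in> Q. {q - eps - z | z. z \<in> int_orthant} \<inter> Q = {}}"

definition conormal :: "real^'p \<Rightarrow> (real^'p) set \<Rightarrow> (real^'p) set" where
  "conormal M Q = {q + z | q z. q \<in> Q \<and> z \<in> nonneg_orthant} \<inter> {M - z | z. z \<in> nonneg_orthant}"

definition Ydiamond :: "(real^'n) set \<Rightarrow> (real^'n \<Rightarrow> real^'p) \<Rightarrow> real^'p \<Rightarrow> (real^'p) set" where
  "Ydiamond S f M = {y + z | y z. y \<in> f ` S \<and> z \<in> nonneg_orthant} \<inter> {M - z | z. z \<in> nonneg_orthant}"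

definition P2_obj :: "(real^'n \<Rightarrow> real^'p) \<Rightarrow> real^'p \<Rightarrow> real^'p \<Rightarrow> real^'n \<Rightarrow> real" where
  "P2_obj f dhat v x = Max (range (\<lambda>j. (f x $ j - v $ j) / dhat $ j))"

definition P2_optimal :: "(real^'n) set \<Rightarrow> (real^'n \<Rightarrow> real^'p) \<Rightarrow> real^'p \<Rightarrow> real^'p \<Rightarrow> real^'n \<Rightarrow> real \<Rightarrow> bool" where
  "P2_optimal S f dhat v x t \<longleftrightarrow> x \<in> S \<and> t = P2_obj f dhat v x \<and> (\<forall>y\<in>S. t \<le> P2_obj f dhat v y)"

definition remove_improper :: "(real^'p) set \<Rightarrow> (real^'p) set" where
  "remove_improper V = {v \<in> V. \<not> (\<exists>v'\<in>V. v' \<noteq> v \<and> v' \<le> v)}"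

text \<open>One pass of the while loop of Solve(QVP). State = (V^k, V_eps, Y_WN).\<close>
inductive solve_step ::
  "(real^'n) set \<Rightarrow> (real^'n \<Rightarrow> real^'p) \<Rightarrow> real^'p \<Rightarrow> real
   \<Rightarrow> (real^'p) set \<times> (real^'p) set \<times> (real^'p) set
   \<Rightarrow> (real^'p) set \<times> (real^'p) set \<times> (real^'p) set \<Rightarrow> bool"
  for S f dhat eps where
  eps_step: "\<lbrakk> v \<in> V; v \<notin> Ve; P2_optimal S f dhat v x t;
              norm ((v + t *\<^sub>R dhat) - v) \<le> eps \<rbrakk>
     \<Longrightarrow> solve_step S f dhat eps (V, Ve, Y) (V, insert v Ve, insert (f x) Y)"
| split_step: "\<lbrakk> v \<in> V; v \<notin> Ve; P2_optimal S f dhat v x t;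
              norm ((v + t *\<^sub>R dhat) - v) > eps \<rbrakk>
     \<Longrightarrow> solve_step S f dhat eps (V, Ve, Y)
          (remove_improper ((V - {v}) \<union>
              range (\<lambda>i. v + ((v + t *\<^sub>R dhat) $ i - v $ i) *\<^sub>R axis i 1)),
           Ve, insert (f x) Y)"

end

theory Submission
  imports Defs
begin

text \<open>The current vertex set V stays a finite
antichain, no vertex lies in the interior of the upper image f(S) + R^p_+ (hence the optimal value
t of (P^2(v)) is nonnegative and the new vertices lie in [v, w]), and every point of f(S) dominates
a vertex, i.e. the union of the boxes [v, M] is an outer approximation of the upper image. A vertex
is moved to V_eps only when f(x) \<le> w = v + t dhat with |w - v| \<le> eps, so it lies eps-above a
point recorded in Y_WN. At termination V_eps = V; then U contains Y^diamond, which contains L, and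
every point of U lies eps-above a point of L. Such an eps-covering turns weak minimality in a
smaller set into eps-minimality in a larger one.\<close>

text \<open>The library's \<open><\<close> on vectors is the strict part of \<open>\<le>\<close>, not the componentwise strict
order needed for weak minimality.\<close>

definition vec_strict_less :: "'a::ord^'n \<Rightarrow> 'a^'n \<Rightarrow> bool" (infix "\<lless>" 50) where
  "x \<lless> y \<longleftrightarrow> (\<forall>i. x $ i < y $ i)"

lemma le_strict_less_trans: "x \<le> y \<Longrightarrow> y \<lless> z \<Longrightarrow> x \<lless> (z::'a::preorder^'n)"
  by (auto simp: less_eq_vec_def vec_strict_less_def intro: le_less_trans)

lemma strict_less_le_trans: "x \<lless> y \<Longrightarrow> y \<le> z \<Longrightarrow> x \<lless> (z::'a::preorder^'n)"
  by (auto simp: less_eq_vec_def vec_strict_less_def intro: less_le_trans)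

lemma strict_less_not_le: "x \<lless> y \<Longrightarrow> \<not> y \<le> (x::'a::preorder^'n)"
  by (meson less_eq_vec_def vec_strict_less_def less_le_not_le)

lemma eps_min_eq: "eps_min e Q = {q \<in> Q. \<not> (\<exists>y\<in>Q. y + e \<lless> q)}"
proof -
  have "(\<exists>z\<in>int_orthant. q - e - z \<in> Q) \<longleftrightarrow> (\<exists>y\<in>Q. y + e \<lless> q)" for q
  proof
    assume "\<exists>z\<in>int_orthant. q - e - z \<in> Q"
    then obtain z where "z \<in> int_orthant" "q - e - z \<in> Q" by blast
    then show "\<exists>y\<in>Q. y + e \<lless> q"
      by (intro bexI[of _ "q - e - z"]) (auto simp: int_orthant_def vec_strict_less_def)
  next
    assume "\<exists>y\<in>Q. y + e \<lless> q"
    then obtain y where "y \<in> Q" "y + e \<lless> q" by blast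
    then show "\<exists>z\<in>int_orthant. q - e - z \<in> Q"
      by (intro bexI[of _ "q - e - y"]) (auto simp: int_orthant_def vec_strict_less_def less_diff_eq)
  qed
  then show ?thesis
    unfolding eps_min_def by blast
qed

lemma WMin_eq_eps_min_zero: "WMin Q = eps_min 0 Q"
  by (simp add: WMin_def eps_min_def)

lemma WMin_eq: "WMin Q = {q \<in> Q. \<not> (\<exists>y\<in>Q. y \<lless> q)}"
  by (simp add: WMin_eq_eps_min_zero eps_min_eq)

lemma conormal_eq: "conormal M Q = {y. (\<exists>q\<in>Q. q \<le> y) \<and> y \<le> M}"
proof -
  have orthant: "nonneg_orthant = {z. 0 \<le> z}"
    by (simp add: nonneg_orthant_def less_eq_vec_def)
  have "{q + z |q z. q \<in> Q \<and> z \<in> nonneg_orthant} = {y. \<exists>q\<in>Q. q \<le> y}"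
    unfolding orthant by (auto intro: add_increasing2) (metis add.commute diff_add_cancel diff_ge_0_iff_ge)
  moreover have "{M - z |z. z \<in> nonneg_orthant} = {y. y \<le> M}"
    unfolding orthant by (auto intro!: exI[of _ "M - y" for y])
  ultimately show ?thesis
    unfolding conormal_def by blast
qed

lemma Ydiamond_eq_conormal: "Ydiamond S f M = conormal M (f ` S)"
  unfolding Ydiamond_def conormal_def by simp

lemma conormal_subset:
  assumes "\<And>q. q \<in> Q \<Longrightarrow> \<exists>p\<in>P. p \<le> q"
  shows "conormal M Q \<subseteq> conormal M P"
  using assms by (auto simp: conormal_eq intro: order_trans)

lemma conormal_eps_cover:
  assumes "\<And>p. p \<in> P \<Longrightarrow> \<exists>q\<in>Q. q \<le> p + e" and "\<And>q. q \<in> Q \<Longrightarrow> q \<le> M"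
    and "u \<in> conormal M P"
  shows "\<exists>y\<in>conormal M Q. y \<le> u + e"
proof -
  obtain p where "p \<in> P" "p \<le> u"
    using assms(3) by (auto simp: conormal_eq)
  then obtain q where "q \<in> Q" "q \<le> p + e"
    using assms(1) by blast
  with \<open>p \<le> u\<close> have "q \<le> u + e"
    by (meson add_right_mono order_trans)
  moreover have "q \<in> conormal M Q"
    using \<open>q \<in> Q\<close> assms(2) by (auto simp: conormal_eq)
  ultimately show ?thesis by blast
qed

lemma WMin_subset_eps_min:
  assumes "Y \<subseteq> U" and "\<And>u. u \<in> U \<Longrightarrow> \<exists>y\<in>Y. y \<le> u + e"
  shows "WMin Y \<subseteq> eps_min e U"
  unfolding WMin_eq eps_min_eq using assms le_strict_less_trans by blast

lemma eps_min_Int_subset: "A \<subseteq> B \<Longrightarrow> eps_min e B \<inter> A \<subseteq> eps_min e A"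
  by (auto simp: eps_min_eq)

lemma P2_optimal_upper:
  assumes "P2_optimal S f dhat v x t" and "\<forall>i. 0 < dhat $ i"
  shows "f x \<le> v + t *\<^sub>R dhat"
  unfolding less_eq_vec_def
proof
  fix i
  have "(f x $ i - v $ i) / dhat $ i \<le> t"
    using assms(1) unfolding P2_optimal_def P2_obj_def by (auto intro: Max_ge)
  then show "f x $ i \<le> (v + t *\<^sub>R dhat) $ i"
    using assms(2) by (simp add: pos_divide_le_eq algebra_simps)
qed

lemma P2_optimal_lower:
  assumes "P2_optimal S f dhat v x t" and "\<forall>i. 0 < dhat $ i" and "y \<in> S"
  shows "\<not> f y \<lless> v + t *\<^sub>R dhat"
proof -
  have "P2_obj f dhat v y \<in> range (\<lambda>j. (f y $ j - v $ j) / dhat $ j)"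
    unfolding P2_obj_def by (rule Max_in) auto
  moreover have "t \<le> P2_obj f dhat v y"
    using assms(1,3) unfolding P2_optimal_def by blast
  ultimately obtain i where "t \<le> (f y $ i - v $ i) / dhat $ i"
    by auto
  then have "(v + t *\<^sub>R dhat) $ i \<le> f y $ i"
    using assms(2) by (simp add: pos_le_divide_eq algebra_simps)
  then show ?thesis
    by (auto simp: vec_strict_less_def not_less[symmetric])
qed

lemma P2_optimal_nonneg:
  assumes "P2_optimal S f dhat v x t" and "\<forall>i. 0 < dhat $ i" and "\<not> f x \<lless> v"
  shows "0 \<le> t"
proof (rule ccontr)
  assume "\<not> 0 \<le> t"
  with assms(2) have "v + t *\<^sub>R dhat \<lless> v"
    by (simp add: vec_strict_less_def mult_neg_pos)
  with P2_optimal_upper[OF assms(1,2)] have "f x \<lless> v"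
    by (rule le_strict_less_trans)
  with assms(3) show False ..
qed

definition split_vertices :: "real^'p \<Rightarrow> real^'p \<Rightarrow> (real^'p) set" where
  "split_vertices v w = range (\<lambda>i. v + (w $ i - v $ i) *\<^sub>R axis i 1)"

lemma finite_split_vertices: "finite (split_vertices v w)"
  by (simp add: split_vertices_def)

lemma split_vertices_between:
  assumes "v \<le> w" and "c \<in> split_vertices v w"
  shows "v \<le> c" and "c \<le> w"
  using assms by (auto simp: split_vertices_def less_eq_vec_def axis_def)

lemma split_vertex_below:
  assumes "v \<le> y" and "\<not> y \<lless> w"
  shows "\<exists>c\<in>split_vertices v w. c \<le> y"
proof -
  obtain i where "w $ i \<le> y $ i"
    using assms(2) by (auto simp: vec_strict_less_def not_less)
  then have "v + (w $ i - v $ i) *\<^sub>R axis i 1 \<le> y"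
    using assms(1) by (auto simp: less_eq_vec_def axis_def)
  then show ?thesis
    unfolding split_vertices_def by blast
qed

lemma remove_improper_subset: "remove_improper R \<subseteq> R"
  by (auto simp: remove_improper_def)

lemma remove_improper_antichain:
  "v \<in> remove_improper R \<Longrightarrow> v' \<in> remove_improper R \<Longrightarrow> v' \<le> v \<Longrightarrow> v' = v"
  by (auto simp: remove_improper_def)

lemma remove_improper_below:
  fixes R :: "(real^'p) set"
  assumes "finite R" and "r \<in> R"
  shows "\<exists>r'\<in>remove_improper R. r' \<le> r"
proof -
  obtain r' where "r' \<in> R" "r' \<le> r" "\<forall>b\<in>R. b \<le> r' \<longrightarrow> r' = b"
    using finite_has_minimal2[OF assms] by blast
  then show ?thesis
    unfolding remove_improper_def by blast
qed

lemma remove_improper_keeps: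
  fixes V C :: "(real^'p) set"
  assumes "\<forall>v\<in>V. \<forall>v'\<in>V. v' \<le> v \<longrightarrow> v' = v" and "v \<in> V" and "u \<in> V" and "u \<noteq> v"
    and "\<And>c. c \<in> C \<Longrightarrow> v \<le> c"
  shows "u \<in> remove_improper ((V - {v}) \<union> C)"
  using assms unfolding remove_improper_def by (blast intro: order_trans)

definition solve_invariant ::
  "(real^'n) set \<Rightarrow> (real^'n \<Rightarrow> real^'p) \<Rightarrow> real
   \<Rightarrow> (real^'p) set \<times> (real^'p) set \<times> (real^'p) set \<Rightarrow> bool" where
  "solve_invariant S f eps = (\<lambda>(V, Ve, Y).
     finite V \<and> (\<forall>v\<in>V. \<forall>v'\<in>V. v' \<le> v \<longrightarrow> v' = v)
     \<and> (\<forall>v\<in>V. \<forall>x\<in>S. \<not> f x \<lless> v) \<and> (\<forall>x\<in>S. \<exists>v\<in>V. v \<le> f x)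
     \<and> Ve \<subseteq> V \<and> (\<forall>v\<in>Ve. \<exists>y\<in>Y. y \<le> v + (\<chi> i. eps)) \<and> Y \<subseteq> f ` S)"

lemma solve_invariant_init:
  fixes f :: "real^'n \<Rightarrow> real^'p"
  assumes "\<forall>x\<in>S. m \<le> f x"
  shows "solve_invariant S f eps ({m}, {}, {})"
  using assms by (auto simp: solve_invariant_def dest: strict_less_not_le)

lemma solve_invariant_eps_step:
  fixes f :: "real^'n \<Rightarrow> real^'p"
  assumes inv: "solve_invariant S f eps (V, Ve, Y)" and "v \<in> V"
    and opt: "P2_optimal S f dhat v x t" and dhat: "\<forall>i. 0 < dhat $ i"
    and "norm (t *\<^sub>R dhat) \<le> eps"
  shows "solve_invariant S f eps (V, insert v Ve, insert (f x) Y)"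
proof -
  have "t *\<^sub>R dhat \<le> (\<chi> i. eps)"
    unfolding less_eq_vec_def
    using component_le_norm_cart[of "t *\<^sub>R dhat"] assms(5) by (metis abs_ge_self order_trans vec_lambda_beta)
  with P2_optimal_upper[OF opt dhat] have "f x \<le> v + (\<chi> i. eps)"
    by (meson add_left_mono order_trans)
  moreover have "x \<in> S"
    using opt by (simp add: P2_optimal_def)
  ultimately show ?thesis
    using inv \<open>v \<in> V\<close> by (auto simp: solve_invariant_def)
qed

lemma solve_invariant_split_step:
  fixes f :: "real^'n \<Rightarrow> real^'p"
  assumes inv: "solve_invariant S f eps (V, Ve, Y)" and v: "v \<in> V" "v \<notin> Ve"
    and opt: "P2_optimal S f dhat v x t" and dhat: "\<forall>i. 0 < dhat $ i"
  shows "solve_invariant S f eps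
    (remove_improper ((V - {v}) \<union> split_vertices v (v + t *\<^sub>R dhat)), Ve, insert (f x) Y)"
proof -
  define w where "w = v + t *\<^sub>R dhat"
  define R where "R = (V - {v}) \<union> split_vertices v w"
  have fin: "finite V" and antichain: "\<forall>v\<in>V. \<forall>v'\<in>V. v' \<le> v \<longrightarrow> v' = v"
    and outside: "\<forall>u\<in>V. \<forall>y\<in>S. \<not> f y \<lless> u" and outer: "\<forall>y\<in>S. \<exists>u\<in>V. u \<le> f y"
    and Ve: "Ve \<subseteq> V" "\<forall>u\<in>Ve. \<exists>y\<in>Y. y \<le> u + (\<chi> i. eps)" and Y: "Y \<subseteq> f ` S"
    using inv by (auto simp: solve_invariant_def)
  have "x \<in> S"
    using opt by (simp add: P2_optimal_def)
  have lower: "\<not> f y \<lless> w" if "y \<in> S" for y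
    using P2_optimal_lower[OF opt dhat that] by (simp add: w_def)
  have "0 \<le> t"
    using P2_optimal_nonneg[OF opt dhat] outside v(1) \<open>x \<in> S\<close> by blast
  then have "v \<le> w"
    using dhat by (auto simp: w_def less_eq_vec_def less_imp_le)
  note between = split_vertices_between[OF this]
  have "finite R"
    using fin by (simp add: R_def finite_split_vertices)
  have outside': "\<forall>c\<in>R. \<forall>y\<in>S. \<not> f y \<lless> c"
    using outside lower between(2) strict_less_le_trans unfolding R_def by blast
  have outer': "\<forall>y\<in>S. \<exists>c\<in>remove_improper R. c \<le> f y"
  proof
    fix y assume "y \<in> S"
    then obtain u where "u \<in> V" "u \<le> f y"
      using outer by blast
    then have "\<exists>r\<in>R. r \<le> f y"
      using split_vertex_below[OF _ lower[OF \<open>y \<in> S\<close>]] unfolding R_def by (cases "u = v") auto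
    then show "\<exists>c\<in>remove_improper R. c \<le> f y"
      using remove_improper_below[OF \<open>finite R\<close>] order_trans by blast
  qed
  have "Ve \<subseteq> remove_improper R"
    using remove_improper_keeps[OF antichain v(1) _ _ between(1)] Ve(1) v(2) unfolding R_def by blast
  then show ?thesis
    using \<open>finite R\<close> outside' outer' Ve Y \<open>x \<in> S\<close> remove_improper_subset[of R]
    by (auto simp: solve_invariant_def R_def w_def finite_subset remove_improper_antichain)
qed

lemma solve_step_invariant:
  assumes "solve_step S f dhat eps s s'" and "solve_invariant S f eps s" and "\<forall>i. 0 < dhat $ i"
  shows "solve_invariant S f eps s'"
  using assms(1)
proof cases
  case (eps_step v V Ve x t Y)
  then show ?thesis
    using solve_invariant_eps_step[OF _ eps_step(3,5) assms(3)] assms(2) by simp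
next
  case (split_step v V Ve x t Y)
  then show ?thesis
    using solve_invariant_split_step[OF _ split_step(3-5) assms(3)] assms(2)
    by (simp add: split_vertices_def)
qed

lemma solve_run_invariant:
  assumes "(solve_step S f dhat eps)\<^sup>*\<^sup>* s s'" and "solve_invariant S f eps s"
    and "\<forall>i. 0 < dhat $ i"
  shows "solve_invariant S f eps s'"
  using assms by (induction rule: rtranclp_induct) (auto intro: solve_step_invariant)

theorem mainTheorem9:
  fixes S :: "(real^'n) set"
    and f :: "real^'n \<Rightarrow> real^'p"
    and m M dhat :: "real^'p"
    and eps :: real
    and V Ve YWN :: "(real^'p) set"
  assumes p2: "CARD('p) \<ge> 2"
    and S_ne: "S \<noteq> {}" and S_convex: "convex S" and S_compact: "compact S"
    and f_sqc: "\<forall>i. strictly_quasiconvex_on S (\<lambda>x. f x $ i)"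
    and m_min: "\<forall>i. (\<exists>x\<in>S. f x $ i = m $ i) \<and> (\<forall>x\<in>S. m $ i \<le> f x $ i)"
    and m_notin: "m \<notin> f ` S"
    and M_ub: "\<forall>i. \<forall>x\<in>S. f x $ i \<le> M $ i"
    and dhat_pos: "\<forall>i. 0 < dhat $ i"
    and eps_nonneg: "0 \<le> eps"
    and run: "(solve_step S f dhat eps)\<^sup>*\<^sup>* ({m}, {}, {}) (V, Ve, YWN)"
    and terminated: "V - Ve = {}"
  shows "let epsv = (\<chi> i. eps) :: real^'p;
             L = conormal M YWN;
             U = conormal M Ve;
             Yd = Ydiamond S f M
         in U = (\<Union>v\<in>V. {z. v \<le> z \<and> z \<le> M})
            \<and> (L \<subseteq> Yd \<and> Yd \<subseteq> U)
            \<and> (WMin Yd \<subseteq> eps_min epsv U \<inter> Yd \<and> eps_min epsv U \<inter> Yd \<subseteq> eps_min epsv Yd)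
            \<and> WMin L \<subseteq> eps_min epsv Yd"
proof -
  \<comment> \<open>Only the bounds \<open>m \<le> f x \<le> M\<close> and \<open>dhat > 0\<close> are used: the other hypotheses make the
    subproblems solvable and the loop terminate, whereas here the optimal solutions are part of
    \<open>run\<close> and termination is assumed.\<close>
  have "solve_invariant S f eps (V, Ve, YWN)"
    using solve_run_invariant[OF run solve_invariant_init dhat_pos] m_min by (simp add: less_eq_vec_def)
  then have outer: "\<And>y. y \<in> f ` S \<Longrightarrow> \<exists>v\<in>Ve. v \<le> y"
    and close: "\<And>v. v \<in> Ve \<Longrightarrow> \<exists>y\<in>YWN. y \<le> v + (\<chi> i. eps)"
    and Y: "YWN \<subseteq> f ` S" and "Ve = V"
    using terminated by (auto simp: solve_invariant_def)
  define L U Yd where "L = conormal M YWN" and "U = conormal M Ve" and "Yd = Ydiamond S f M"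
  have LYd: "L \<subseteq> Yd"
    unfolding L_def Yd_def Ydiamond_eq_conormal using Y by (intro conormal_subset) auto
  have YdU: "Yd \<subseteq> U"
    unfolding U_def Yd_def Ydiamond_eq_conormal using outer by (rule conormal_subset)
  have cover: "\<exists>y\<in>L. y \<le> u + (\<chi> i. eps)" if "u \<in> U" for u
    using conormal_eps_cover[OF close _ that[unfolded U_def]] Y M_ub
    unfolding L_def by (force simp: less_eq_vec_def)
  have "U = (\<Union>v\<in>V. {z. v \<le> z \<and> z \<le> M})"
    unfolding U_def conormal_eq \<open>Ve = V\<close> by blast
  moreover have "WMin Yd \<subseteq> eps_min (\<chi> i. eps) U"
    using YdU cover LYd by (intro WMin_subset_eps_min) blast+
  moreover have "WMin Yd \<subseteq> Yd"
    by (auto simp: WMin_eq)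
  moreover have "WMin L \<subseteq> eps_min (\<chi> i. eps) Yd"
    using LYd cover YdU by (intro WMin_subset_eps_min) blast+
  ultimately show ?thesis
    unfolding Let_def L_def[symmetric] U_def[symmetric] Yd_def[symmetric]
    using LYd YdU eps_min_Int_subset[OF YdU] by blast
qed

end
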